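(* Let $(C,A_\zeta,\mathbb X,A,B;\sigma_1)$ be an invertible node. Then $(C\mathbb X^{-1},A,\mathbb X^{-1},A_\zeta,\mathbb X^{-1}B;\sigma_1)$ is also a node, i.e. with $A$ in the role of $A_\zeta$ and $A_\zeta$ in the role of $A$: $\mathbb X^{-1}(D(A_\zeta))\subseteq D(A_\zeta)$ and $A_\zeta\mathbb X^{-1}u+\mathbb X^{-1}Au+\mathbb X^{-1}B\sigma_1C\mathbb X^{-1}u=0$ for all $u\in D(A)$.
   Context: A Krein space $\mathcal K$ is a Hilbert space with an extra continuous Hermitian (possibly indefinite) sesquilinear form; adjoints are with respect to it; $\mathbb C^2$ has its standard inner product. Let $\sigma_1$ be an invertible self-adjoint $2\times2$ matrix. A node $(C,A_\zeta,\mathbb X,A,B;\sigma_1)$ consists of bounded $C:\mathcal K\to\mathbb C^2$, $\mathbb X:\mathcal K\to\mathcal K$, $B:\mathbb C^2\to\mathcal K$ and generators $A,A_\zeta$ of strongly continuous groups on $\mathcal K$ with common dense domain $D(A)=D(A_\zeta)$, such that $\mathbb X(D(A))\subseteq D(A)$ and $A\mathbb Xu+\mathbb XA_\zeta u+B\sigma_1Cu=0$ for all $u\in D(A)$. The node is invertible if $\mathbb X$ is boundedly invertible and $\mathbb X^{-1}(D(A))\subseteq D(A)$. *)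

theory Defs
  imports "HOL-Analysis.Analysis"
begin

text \<open>The distribution has no class of complex vector spaces, so the complex
structure of the space is given explicitly: a complex scalar multiplication
smul on a real Banach space type, and an inner product ip inducing its norm.\<close>

definition complex_hilbert :: "(complex \<Rightarrow> 'k::{real_normed_vector,complete_space} \<Rightarrow> 'k) \<Rightarrow> ('k \<Rightarrow> 'k \<Rightarrow> complex) \<Rightarrow> bool" where
  "complex_hilbert smul ip \<longleftrightarrow>
     (\<forall>r x. smul (complex_of_real r) x = r *\<^sub>R x) \<and>
     (\<forall>a b x. smul (a * b) x = smul a (smul b x)) \<and>
     (\<forall>a b x. smul (a + b) x = smul a x + smul b x) \<and>
     (\<forall>a x y. smul a (x + y) = smul a x + smul a y) \<and>
     (\<forall>x y z. ip (x + y) z = ip x z + ip y z) \<and>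
     (\<forall>a x y. ip (smul a x) y = a * ip x y) \<and>
     (\<forall>x y. ip y x = cnj (ip x y)) \<and>
     (\<forall>x. ip x x = complex_of_real ((norm x)\<^sup>2))"

definition hermitian_form :: "(complex \<Rightarrow> 'k::real_normed_vector \<Rightarrow> 'k) \<Rightarrow> ('k \<Rightarrow> 'k \<Rightarrow> complex) \<Rightarrow> bool" where
  "hermitian_form smul J \<longleftrightarrow>
     (\<forall>x y z. J (x + y) z = J x z + J y z) \<and>
     (\<forall>a x y. J (smul a x) y = a * J x y) \<and>
     (\<forall>x y. J y x = cnj (J x y)) \<and>
     (\<exists>M. \<forall>x y. cmod (J x y) \<le> M * norm x * norm y)"

definition krein_space where
  "krein_space smul ip J \<longleftrightarrow> complex_hilbert smul ip \<and> hermitian_form smul J"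

definition bounded_op :: "(complex \<Rightarrow> 'k::real_normed_vector \<Rightarrow> 'k) \<Rightarrow> ('k \<Rightarrow> 'k) \<Rightarrow> bool" where
  "bounded_op smul T \<longleftrightarrow> bounded_linear T \<and> (\<forall>a x. T (smul a x) = smul a (T x))"

definition bounded_op_to_C2 :: "(complex \<Rightarrow> 'k::real_normed_vector \<Rightarrow> 'k) \<Rightarrow> ('k \<Rightarrow> complex^2) \<Rightarrow> bool" where
  "bounded_op_to_C2 smul C \<longleftrightarrow> bounded_linear C \<and> (\<forall>a x. C (smul a x) = a *s C x)"

definition bounded_op_from_C2 :: "(complex \<Rightarrow> 'k::real_normed_vector \<Rightarrow> 'k) \<Rightarrow> (complex^2 \<Rightarrow> 'k) \<Rightarrow> bool" where
  "bounded_op_from_C2 smul B \<longleftrightarrow> bounded_linear B \<and> (\<forall>a v. B (a *s v) = smul a (B v))"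

definition c0_group :: "(complex \<Rightarrow> 'k::real_normed_vector \<Rightarrow> 'k) \<Rightarrow> (real \<Rightarrow> 'k \<Rightarrow> 'k) \<Rightarrow> bool" where
  "c0_group smul T \<longleftrightarrow> (\<forall>t. bounded_op smul (T t)) \<and> T 0 = id \<and>
     (\<forall>s t. T (s + t) = T s \<circ> T t) \<and> (\<forall>x. continuous_on UNIV (\<lambda>t. T t x))"

definition generator_of :: "(real \<Rightarrow> 'k::real_normed_vector \<Rightarrow> 'k) \<Rightarrow> 'k set \<Rightarrow> ('k \<Rightarrow> 'k) \<Rightarrow> bool" where
  "generator_of T D A \<longleftrightarrow>
     D = {x. \<exists>y. ((\<lambda>h. (T h x - x) /\<^sub>R h) \<longlongrightarrow> y) (at 0)} \<and>
     (\<forall>x\<in>D. ((\<lambda>h. (T h x - x) /\<^sub>R h) \<longlongrightarrow> A x) (at 0))"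

definition group_generator where
  "group_generator smul D A \<longleftrightarrow> (\<exists>T. c0_group smul T \<and> generator_of T D A)"

definition self_adjoint2 :: "complex^2^2 \<Rightarrow> bool" where
  "self_adjoint2 M \<longleftrightarrow> (\<chi> i j. cnj (M $ j $ i)) = M"

text \<open>A node (C, Az, X, A, B; sigma1) on the Krein space (smul, ip, J);
 D is the common dense domain D(A) = D(Az).\<close>
definition is_node where
  "is_node smul ip J C Az X A B \<sigma>1 D \<longleftrightarrow>
     krein_space smul ip J \<and>
     invertible \<sigma>1 \<and> self_adjoint2 \<sigma>1 \<and>
     bounded_op_to_C2 smul C \<and> bounded_op smul X \<and> bounded_op_from_C2 smul B \<and>
     group_generator smul D A \<and> group_generator smul D Az \<and>
     closure D = UNIV \<and> X ` D \<subseteq> D \<and>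
     (\<forall>u\<in>D. A (X u) + X (Az u) + B (\<sigma>1 *v C u) = 0)"

definition invertible_node where
  "invertible_node smul ip J C Az X A B \<sigma>1 D \<longleftrightarrow>
     is_node smul ip J C Az X A B \<sigma>1 D \<and> bij X \<and> bounded_op smul (inv X) \<and> inv X ` D \<subseteq> D"

end

theory Submission
  imports Defs
begin

text \<open>Substituting u = X v into the node identity and applying the additive map
inv X to it swaps the roles of A and Az. Nothing analytic is needed: the generators
and their common domain are unchanged, and only boundedness of inv X must be known.\<close>

lemma bounded_op_to_C2_comp:
  assumes "bounded_op_to_C2 smul C" and "bounded_op smul T"
  shows "bounded_op_to_C2 smul (C \<circ> T)"
  using assms unfolding bounded_op_to_C2_def bounded_op_def
  by (auto intro: bounded_linear_compose simp: comp_def)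

lemma bounded_op_from_C2_comp:
  assumes "bounded_op smul T" and "bounded_op_from_C2 smul B"
  shows "bounded_op_from_C2 smul (T \<circ> B)"
  using assms unfolding bounded_op_from_C2_def bounded_op_def
  by (auto intro: bounded_linear_compose simp: comp_def)

lemma node_identity_inverse:
  fixes X Y A Az :: "'a::ab_group_add \<Rightarrow> 'a" and B :: "'c \<Rightarrow> 'a" and C :: "'a \<Rightarrow> 'c"
  assumes node_eq: "A (X (Y u)) + X (Az (Y u)) + B (C (Y u)) = 0"
    and right_inv: "\<And>x. X (Y x) = x" and left_inv: "\<And>x. Y (X x) = x"
    and Y_additive: "\<And>x y. Y (x + y) = Y x + Y y"
  shows "Az (Y u) + Y (A u) + Y (B (C (Y u))) = 0"
proof -
  have "Y 0 = 0" using Y_additive[of 0 0] by simp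
  moreover have "A u + X (Az (Y u)) + B (C (Y u)) = 0"
    using node_eq right_inv by simp
  ultimately have "Y (A u) + Az (Y u) + Y (B (C (Y u))) = 0"
    by (metis Y_additive left_inv)
  then show ?thesis by (simp add: algebra_simps)
qed

theorem mainTheorem5:
  fixes smul :: "complex \<Rightarrow> 'k::{real_normed_vector,complete_space} \<Rightarrow> 'k"
    and ip J :: "'k \<Rightarrow> 'k \<Rightarrow> complex"
    and C :: "'k \<Rightarrow> complex^2" and B :: "complex^2 \<Rightarrow> 'k"
    and X A Az :: "'k \<Rightarrow> 'k" and \<sigma>1 :: "complex^2^2" and D :: "'k set"
  assumes "invertible_node smul ip J C Az X A B \<sigma>1 D"
  shows "is_node smul ip J (C \<circ> inv X) A (inv X) Az (inv X \<circ> B) \<sigma>1 D"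
proof -
  have node: "is_node smul ip J C Az X A B \<sigma>1 D" and "bij X"
    and inv_bounded: "bounded_op smul (inv X)" and inv_D: "inv X ` D \<subseteq> D"
    using assms unfolding invertible_node_def by auto
  have inv_additive: "inv X (x + y) = inv X x + inv X y" for x y
    using inv_bounded by (simp add: bounded_op_def linear_simps)
  have "Az (inv X u) + inv X (A u) + inv X (B (\<sigma>1 *v C (inv X u))) = 0" if "u \<in> D" for u
  proof (rule node_identity_inverse[where X = X and B = "\<lambda>w. B (\<sigma>1 *v w)"])
    show "A (X (inv X u)) + X (Az (inv X u)) + B (\<sigma>1 *v C (inv X u)) = 0"
      using node inv_D that unfolding is_node_def by blast
  qed (use \<open>bij X\<close> inv_additive in \<open>auto simp: bij_is_inj bij_is_surj surj_f_inv_f\<close>)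
  then show ?thesis
    using node inv_bounded inv_D
      bounded_op_to_C2_comp[OF _ inv_bounded] bounded_op_from_C2_comp[OF inv_bounded]
    unfolding is_node_def by auto
qed

end
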